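(* Let $W$ be a generalized contingent solution for (MOC), $(t,x)\in[0,T)\times\mathbb{R}^n$ and $y\in W(t,x)$. Assume $W$ is Lipschitz around $(t,x)$ and $y\in\mathcal{PE}(W(t,x),P)$. Then $$0\in\mathcal{E}\Big(\mathrm{cl}\Big(\bigcup_{(f,L)\in(\mathrm{FL})(x)}\big(L+D_\uparrow W((t,x,y);(1,f))\big)\Big),P\Big)+P.$$
   Context: Setting (MOC). Fix $T>0$, $I=[0,T]$, integers $n,m,p\ge1$, nonempty compact $U\subset\mathbb{R}^m$; $f:\mathbb{R}^n\times U\to\mathbb{R}^n$ and $L:\mathbb{R}^n\times U\to\mathbb{R}^p$ continuous, bounded, and Lipschitz in $x$ uniformly in $u$. $(\mathrm{FL})(x)=\mathrm{cl}\,\mathrm{co}\{(f(x,u),L(x,u)):u\in U\}$. Euclidean norms. $P\subset\mathbb{R}^p$: closed convex pointed cone containing $0$ with nonempty interior. $\mathcal{E}(S,P)=\{y\in S:(y-P)\cap S=\{y\}\}$; contingent cone $T_S(z)=\{v:\exists h_k\to0^+,\exists v_k\to v,z+h_kv_k\in S\}$; $\mathcal{PE}(S,P)=\{y\in\mathcal{E}(S,P):T_{S+P}(y)\cap(-P)=\{0\}\}$. For $W:I\times\mathbb{R}^n\rightrightarrows\mathbb{R}^p$, $W_\uparrow=W+P$; the contingent derivative $DW_\uparrow(t,x,y)$ is the set-valued map whose graph is $T_{\mathrm{gph}W_\uparrow}(t,x,y)$, its value at $(\tau,v)$ written $DW_\uparrow((t,x,y);(\tau,v))$; $D_\uparrow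 W((t,x,y);(\tau,v))=\mathcal{E}(DW_\uparrow((t,x,y);(\tau,v)),P)$. $W$ is Lipschitz around $(t,x)$ if there are $l>0$ and a neighborhood $\mathcal{O}$ with $W(z_1)\subset W(z_2)+l\|z_1-z_2\|\mathbf{B}$ for $z_1,z_2\in\mathcal{O}$. Extremal element map: for all $(t,x)$, $y\in W(t,x)$: $W(t,x)\cap(y-P)=\{y\}=W(t,x)\cap(y+P)$. Generalized contingent solution: an extremal element map $W$ with (i) for all $(t,x)\in[0,T)\times\mathbb{R}^n$, $y\in W(t,x)$, some $(\bar f,\bar L)\in(\mathrm{FL})(x)$ satisfies $-\bar L\in DW_\uparrow((t,x,y);(1,\bar f))$; (ii) for all $(t,x)\in(0,T]\times\mathbb{R}^n$, $y\in W(t,x)$, $(f,L)\in(\mathrm{FL})(x)$: $L\in DW_\uparrow((t,x,y);(-1,-f))$; (iii) $W(T,x)=\{0\}$. *)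

theory Defs
  imports "HOL-Analysis.Analysis"
begin

definition msum :: "'a::ab_group_add set \<Rightarrow> 'a set \<Rightarrow> 'a set" where
  "msum A B = {a + b | a b. a \<in> A \<and> b \<in> B}"

definition MOC_data ::
  "real \<Rightarrow> 'm::euclidean_space set \<Rightarrow> ('n::euclidean_space \<Rightarrow> 'm \<Rightarrow> 'n)
    \<Rightarrow> ('n \<Rightarrow> 'm \<Rightarrow> 'p::euclidean_space) \<Rightarrow> bool" where
  "MOC_data T U f L \<longleftrightarrow>
     T > 0 \<and> U \<noteq> {} \<and> compact U \<and>
     continuous_on (UNIV \<times> U) (\<lambda>(x, u). f x u) \<and>
     continuous_on (UNIV \<times> U) (\<lambda>(x, u). L x u) \<and>
     bounded ((\<lambda>(x, u). f x u) ` (UNIV \<times> U)) \<and>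
     bounded ((\<lambda>(x, u). L x u) ` (UNIV \<times> U)) \<and>
     (\<exists>K. \<forall>u\<in>U. \<forall>x1 x2. norm (f x1 u - f x2 u) \<le> K * norm (x1 - x2)) \<and>
     (\<exists>K. \<forall>u\<in>U. \<forall>x1 x2. norm (L x1 u - L x2 u) \<le> K * norm (x1 - x2))"

definition FL :: "'m set \<Rightarrow> ('n \<Rightarrow> 'm \<Rightarrow> 'n) \<Rightarrow> ('n \<Rightarrow> 'm \<Rightarrow> 'p)
    \<Rightarrow> 'n \<Rightarrow> ('n::real_normed_vector \<times> 'p::real_normed_vector) set" where
  "FL U f L x = closure (convex hull {(f x u, L x u) | u. u \<in> U})"

definition ordering_cone :: "'p::euclidean_space set \<Rightarrow> bool" where
  "ordering_cone P \<longleftrightarrow> closed P \<and> convex P \<and> cone P \<and> 0 \<in> P \<and>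
     P \<inter> uminus ` P = {0} \<and> interior P \<noteq> {}"

definition eff :: "'p::ab_group_add set \<Rightarrow> 'p set \<Rightarrow> 'p set" where
  "eff S P = {y \<in> S. {y - q | q. q \<in> P} \<inter> S = {y}}"

definition contingent :: "'a::real_normed_vector set \<Rightarrow> 'a \<Rightarrow> 'a set" where
  "contingent S z = {v. \<exists>h vs. (\<forall>k. h k > 0) \<and> h \<longlonglongrightarrow> 0 \<and> vs \<longlonglongrightarrow> v \<and>
                              (\<forall>k. z + h k *\<^sub>R vs k \<in> S)}"

definition prop_eff :: "'p::euclidean_space set \<Rightarrow> 'p set \<Rightarrow> 'p set" where
  "prop_eff S P = {y \<in> eff S P. contingent (msum S P) y \<inter> uminus ` P = {0}}"

definition gph_up :: "real \<Rightarrow> (real \<Rightarrow> 'n \<Rightarrow> 'p set) \<Rightarrow> 'p set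
    \<Rightarrow> (real \<times> 'n::euclidean_space \<times> 'p::euclidean_space) set" where
  "gph_up T W P = {(t, x, y) | t x y. t \<in> {0..T} \<and> y \<in> msum (W t x) P}"

definition DWup :: "real \<Rightarrow> (real \<Rightarrow> 'n::euclidean_space \<Rightarrow> 'p::euclidean_space set) \<Rightarrow> 'p set
    \<Rightarrow> real \<times> 'n \<times> 'p \<Rightarrow> real \<times> 'n \<Rightarrow> 'p set" where
  "DWup T W P z d = {w. (fst d, snd d, w) \<in> contingent (gph_up T W P) z}"

definition Dup :: "real \<Rightarrow> (real \<Rightarrow> 'n::euclidean_space \<Rightarrow> 'p::euclidean_space set) \<Rightarrow> 'p set
    \<Rightarrow> real \<times> 'n \<times> 'p \<Rightarrow> real \<times> 'n \<Rightarrow> 'p set" where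
  "Dup T W P z d = eff (DWup T W P z d) P"

definition lipschitz_around :: "real \<Rightarrow> (real \<Rightarrow> 'n::euclidean_space \<Rightarrow> 'p::euclidean_space set)
    \<Rightarrow> real \<times> 'n \<Rightarrow> bool" where
  "lipschitz_around T W z0 \<longleftrightarrow>
     (\<exists>l>0. \<exists>N. open N \<and> z0 \<in> N \<and>
        (\<forall>z1\<in>N \<inter> ({0..T} \<times> UNIV). \<forall>z2\<in>N \<inter> ({0..T} \<times> UNIV).
           W (fst z1) (snd z1) \<subseteq> msum (W (fst z2) (snd z2)) (cball 0 (l * norm (z1 - z2)))))"

definition extremal_map :: "real \<Rightarrow> (real \<Rightarrow> 'n \<Rightarrow> 'p::ab_group_add set) \<Rightarrow> 'p set \<Rightarrow> bool" where
  "extremal_map T W P \<longleftrightarrow>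
     (\<forall>t\<in>{0..T}. \<forall>x. \<forall>y\<in>W t x.
        W t x \<inter> {y - q | q. q \<in> P} = {y} \<and> W t x \<inter> {y + q | q. q \<in> P} = {y})"

definition gen_contingent_solution ::
  "real \<Rightarrow> 'm::euclidean_space set \<Rightarrow> ('n::euclidean_space \<Rightarrow> 'm \<Rightarrow> 'n)
    \<Rightarrow> ('n \<Rightarrow> 'm \<Rightarrow> 'p::euclidean_space) \<Rightarrow> 'p set \<Rightarrow> (real \<Rightarrow> 'n \<Rightarrow> 'p set) \<Rightarrow> bool" where
  "gen_contingent_solution T U f L P W \<longleftrightarrow>
     extremal_map T W P \<and>
     (\<forall>t\<in>{0..<T}. \<forall>x. \<forall>y\<in>W t x. \<exists>(fb, Lb)\<in>FL U f L x.
         - Lb \<in> DWup T W P (t, x, y) (1, fb)) \<and>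
     (\<forall>t\<in>{0<..T}. \<forall>x. \<forall>y\<in>W t x. \<forall>(fv, Lv)\<in>FL U f L x.
         Lv \<in> DWup T W P (t, x, y) (-1, - fv)) \<and>
     (\<forall>x. W T x = {0})"

end

theory Submission
  imports Defs
begin

text \<open>
  Let K be the contingent cone of W(t,x) + P at y.  Proper efficiency of y
  says that K meets -P only in 0, and for two closed cones with this property every set
  of the form (K + R-ball) \<inter> (a - P) is bounded.  The Lipschitz continuity of W shows that
  each vector of DW_up((t,x,y);(1,f)) lies within a fixed distance of K, uniformly for
  (f,L) in the bounded set (FL)(x); hence so does the closure S of the union of the sets
  L + D_up W((t,x,y);(1,f)).  On compact sets a pointed closed convex cone admits
  efficient (minimal) points.  Condition (i) of a generalized contingent solution yields
  (f,L) in (FL)(x) with -L in DW_up((t,x,y);(1,f)); a minimal point e of this closed set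
  below -L is an element of D_up W with L + e in S \<inter> (-P).  Finally a minimal point m
  of S below L + e is an efficient point of S with -m in P, so 0 = m + (-m).
\<close>

section \<open>Pointed cones and efficient points\<close>

text \<open>The properties of the ordering cone actually used: closed, convex, cone, pointed.\<close>
definition closed_pointed_cone :: "'a::real_normed_vector set \<Rightarrow> bool" where
  "closed_pointed_cone P \<longleftrightarrow> closed P \<and> convex P \<and> cone P \<and> P \<inter> uminus ` P = {0}"

lemma ordering_cone_imp_closed_pointed_cone:
  "ordering_cone P \<Longrightarrow> closed_pointed_cone P"
  unfolding ordering_cone_def closed_pointed_cone_def by blast

lemma closed_pointed_cone_zero: "closed_pointed_cone P \<Longrightarrow> 0 \<in> P"
  unfolding closed_pointed_cone_def by blast

lemma closed_pointed_cone_add: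
  "closed_pointed_cone P \<Longrightarrow> p \<in> P \<Longrightarrow> q \<in> P \<Longrightarrow> p + q \<in> P"
  unfolding closed_pointed_cone_def by (meson convex_cone)

lemma closed_pointed_cone_sum:
  assumes "closed_pointed_cone P" "\<And>a. a \<in> A \<Longrightarrow> g a \<in> P"
  shows "sum g A \<in> P"
  using assms(2)
  by (induction A rule: infinite_finite_induct)
     (auto simp: closed_pointed_cone_zero[OF assms(1)] closed_pointed_cone_add[OF assms(1)])

lemma zero_notin_convex_hull_unit_cone:
  assumes "closed_pointed_cone P"
  shows "0 \<notin> convex hull (P \<inter> sphere 0 1)"
proof
  assume "0 \<in> convex hull (P \<inter> sphere 0 1)"
  then obtain A u where A: "finite A" "A \<subseteq> P \<inter> sphere 0 1" "\<forall>v\<in>A. 0 \<le> u v"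
      "sum u A = 1" "(\<Sum>v\<in>A. u v *\<^sub>R v) = 0"
    unfolding convex_hull_explicit by blast
  have P: "cone P" "P \<inter> uminus ` P = {0}"
    using assms unfolding closed_pointed_cone_def by auto
  obtain v0 where v0: "v0 \<in> A" "u v0 > 0"
    using A(3,4) by (metis less_eq_real_def sum_nonpos zero_less_one not_le)
  have in_P: "u v *\<^sub>R v \<in> P" if "v \<in> A" for v
    using that A(2,3) P(1) by (auto intro: mem_cone)
  have "u v0 *\<^sub>R v0 = - (\<Sum>v\<in>A - {v0}. u v *\<^sub>R v)"
    using A(1,5) v0(1) by (simp add: sum.remove eq_neg_iff_add_eq_0)
  moreover have "(\<Sum>v\<in>A - {v0}. u v *\<^sub>R v) \<in> P"
    using in_P by (intro closed_pointed_cone_sum[OF assms]) auto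
  ultimately have "u v0 *\<^sub>R v0 \<in> P \<inter> uminus ` P"
    using in_P[OF v0(1)] by auto
  then have "v0 = 0" using P(2) v0(2) by auto
  then show False using v0(1) A(2) by auto
qed

lemma strictly_positive_functional:
  fixes P :: "'a::euclidean_space set"
  assumes "closed_pointed_cone P"
  obtains a where "\<And>q. q \<in> P \<Longrightarrow> q \<noteq> 0 \<Longrightarrow> inner a q > 0"
proof -
  have P: "closed P" "cone P"
    using assms unfolding closed_pointed_cone_def by auto
  define H where "H = convex hull (P \<inter> sphere 0 1)"
  have "compact H"
    unfolding H_def using P(1) by (intro compact_convex_hull closed_Int_compact) auto
  then obtain a b where ab: "0 < b" "\<forall>z\<in>H. inner a z > b"
    using separating_hyperplane_closed_0[of H] zero_notin_convex_hull_unit_cone[OF assms]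
    unfolding H_def by (metis compact_imp_closed convex_convex_hull)
  have "inner a q > 0" if "q \<in> P" "q \<noteq> 0" for q
  proof -
    have "(1 / norm q) *\<^sub>R q \<in> H"
      using that P(2) unfolding H_def by (intro hull_inc) (auto intro: mem_cone)
    then have "inner a q / norm q > 0" using ab by fastforce
    then show ?thesis using that(2) by (simp add: zero_less_divide_iff)
  qed
  then show thesis by (rule that)
qed

lemma eff_iff:
  assumes "0 \<in> P"
  shows "y \<in> eff S P \<longleftrightarrow> y \<in> S \<and> (\<forall>q\<in>P. y - q \<in> S \<longrightarrow> q = 0)"
proof -
  have "{y - q | q. q \<in> P} \<inter> S = {y} \<longleftrightarrow> (\<forall>q\<in>P. y - q \<in> S \<longrightarrow> q = 0)" if "y \<in> S"
  proof
    assume eq: "{y - q | q. q \<in> P} \<inter> S = {y}"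
    show "\<forall>q\<in>P. y - q \<in> S \<longrightarrow> q = 0"
    proof (intro ballI impI)
      fix q assume "q \<in> P" "y - q \<in> S"
      then have "y - q \<in> {y - q | q. q \<in> P} \<inter> S" by blast
      then have "y - q \<in> {y}" by (simp only: eq)
      then show "q = 0" by simp
    qed
  next
    assume minimal: "\<forall>q\<in>P. y - q \<in> S \<longrightarrow> q = 0"
    have "{y - q | q. q \<in> P} \<inter> S \<subseteq> {y}" using minimal by auto
    moreover have "y \<in> {y - q | q. q \<in> P}" using assms by (metis (mono_tags) CollectI diff_zero)
    ultimately show "{y - q | q. q \<in> P} \<inter> S = {y}" using that by blast
  qed
  then show ?thesis by (auto simp: eff_def)
qed

text \<open>Compact nonempty sets have efficient points: minimise a strictly positive functional.\<close>
lemma eff_exists: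
  fixes C P :: "'a::euclidean_space set"
  assumes "closed_pointed_cone P" "compact C" "C \<noteq> {}"
  obtains e where "e \<in> eff C P"
proof -
  obtain a where a: "\<And>q. q \<in> P \<Longrightarrow> q \<noteq> 0 \<Longrightarrow> inner a q > 0"
    using strictly_positive_functional[OF assms(1)] by blast
  have "continuous_on C (inner a)" by (intro continuous_intros)
  then obtain e where e: "e \<in> C" "\<forall>z\<in>C. inner a e \<le> inner a z"
    using continuous_attains_inf[OF assms(2,3)] by blast
  have minimal: "q = 0" if "q \<in> P" "e - q \<in> C" for q
  proof (rule ccontr)
    assume "q \<noteq> 0"
    then have "inner a (e - q) < inner a e"
      using a[OF that(1)] by (simp add: inner_diff_right)
    then show False using e(2) that(2) by fastforce
  qed
  show thesis
    using e(1) minimal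
    by (intro that[of e]) (simp add: eff_iff[OF closed_pointed_cone_zero[OF assms(1)]])
qed

lemma eff_lower_section:
  assumes "closed_pointed_cone P" "e \<in> eff (S \<inter> {w. a - w \<in> P}) P"
  shows "e \<in> eff S P"
proof -
  have "a - (e - q) \<in> P" if "q \<in> P" for q
    using assms that closed_pointed_cone_add[OF assms(1), of "a - e" q]
    unfolding eff_iff[OF closed_pointed_cone_zero[OF assms(1)]] by (simp add: algebra_simps)
  then show ?thesis
    using assms(2) unfolding eff_iff[OF closed_pointed_cone_zero[OF assms(1)]] by blast
qed

section \<open>Boundedness of sections near a cone\<close>

lemma msum_cball_iff: "m \<in> msum K (cball 0 R) \<longleftrightarrow> (\<exists>k\<in>K. norm (m - k) \<le> R)"
  unfolding msum_def by (force simp: algebra_simps)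

lemma closed_msum_cball:
  fixes K :: "'a::euclidean_space set"
  assumes "closed K"
  shows "closed (msum K (cball 0 R))"
proof -
  have "msum K (cball 0 R) = (\<Union>k\<in>K. \<Union>e\<in>cball 0 R. {k + e})"
    unfolding msum_def by blast
  then show ?thesis using closed_compact_sums[OF assms compact_cball] by simp
qed

lemma compact_positive_lower_bound:
  fixes \<phi> :: "'a::topological_space \<Rightarrow> real"
  assumes "compact Z" "continuous_on Z \<phi>" "\<And>z. z \<in> Z \<Longrightarrow> \<phi> z > 0"
  obtains \<mu> where "\<mu> > 0" "\<And>z. z \<in> Z \<Longrightarrow> \<mu> \<le> \<phi> z"
proof (cases "Z = {}")
  case False
  then obtain z0 where "z0 \<in> Z" "\<forall>z\<in>Z. \<phi> z0 \<le> \<phi> z"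
    using continuous_attains_inf[OF assms(1) False assms(2)] by blast
  then show thesis using assms(3) by (intro that[of "\<phi> z0"]) auto
next
  case True
  then show thesis by (intro that[of 1]) auto
qed

lemma cone_sum_unit_lower_bound:
  fixes K P :: "'a::euclidean_space set"
  assumes "closed K" "closed P" "K \<inter> uminus ` P = {0}"
  obtains \<mu> where "\<mu> > 0"
    "\<And>k p. k \<in> K \<Longrightarrow> p \<in> P \<Longrightarrow> norm k + norm p = 1 \<Longrightarrow> \<mu> \<le> norm (k + p)"
proof -
  define Z where "Z = {(k, p). k \<in> K \<and> p \<in> P \<and> norm k + norm p = 1}"
  have "Z = (K \<times> P) \<inter> (\<lambda>z. norm (fst z) + norm (snd z)) -` {1}"
    unfolding Z_def by auto
  then have "closed Z"
    using assms(1,2) by (auto intro!: closed_Int closed_Times closed_vimage continuous_intros)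
  moreover have "norm z \<le> 1" if "z \<in> Z" for z
    using that norm_Pair_le[of "fst z" "snd z"] unfolding Z_def by auto
  then have "bounded Z" unfolding bounded_iff by blast
  ultimately have "compact Z" by (simp add: compact_eq_bounded_closed)
  moreover have "norm (fst z + snd z) > 0" if "z \<in> Z" for z
  proof (rule ccontr)
    assume "\<not> norm (fst z + snd z) > 0"
    then have opp: "fst z = - snd z" by (simp add: eq_neg_iff_add_eq_0)
    have "fst z \<in> K" "snd z \<in> P" using that unfolding Z_def by auto
    then have "fst z \<in> K \<inter> uminus ` P" using opp by blast
    then have "fst z = 0" "snd z = 0" using assms(3) opp by auto
    then show False using that unfolding Z_def by auto
  qed
  moreover have "continuous_on Z (\<lambda>z. norm (fst z + snd z))" by (intro continuous_intros)
  ultimately obtain \<mu> where \<mu>: "\<mu> > 0" "\<And>z. z \<in> Z \<Longrightarrow> \<mu> \<le> norm (fst z + snd z)"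
    using compact_positive_lower_bound by blast
  show thesis
    using \<mu> by (intro that[of \<mu>]) (auto simp: Z_def)
qed

text \<open>By homogeneity, under the same hypotheses |k + p| controls |k| + |p| on all of K \<times> P.\<close>
lemma cone_sum_coercive:
  fixes K P :: "'a::euclidean_space set"
  assumes "closed K" "cone K" "closed P" "cone P" "K \<inter> uminus ` P = {0}"
  obtains \<mu> where "\<mu> > 0" "\<And>k p. k \<in> K \<Longrightarrow> p \<in> P \<Longrightarrow> \<mu> * (norm k + norm p) \<le> norm (k + p)"
proof -
  obtain \<mu> where \<mu>: "\<mu> > 0"
    "\<And>k p. k \<in> K \<Longrightarrow> p \<in> P \<Longrightarrow> norm k + norm p = 1 \<Longrightarrow> \<mu> \<le> norm (k + p)"
    using cone_sum_unit_lower_bound[OF assms(1,3,5)] by blast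
  show thesis
  proof (rule that[OF \<mu>(1)])
    fix k p assume kp: "k \<in> K" "p \<in> P"
    define s where "s = norm k + norm p"
    show "\<mu> * (norm k + norm p) \<le> norm (k + p)"
    proof (cases "s = 0")
      case False
      moreover have "s \<ge> 0" unfolding s_def by simp
      ultimately have "s > 0" by linarith
      have "(1 / s) *\<^sub>R k \<in> K" "(1 / s) *\<^sub>R p \<in> P"
        using kp assms(2,4) \<open>s > 0\<close> by (simp_all add: mem_cone)
      moreover have "norm ((1 / s) *\<^sub>R k) + norm ((1 / s) *\<^sub>R p) = 1"
        using \<open>s > 0\<close> by (simp add: s_def add_divide_distrib[symmetric])
      ultimately have "\<mu> \<le> norm ((1 / s) *\<^sub>R k + (1 / s) *\<^sub>R p)" by (rule \<mu>(2))
      also have "\<dots> = norm (k + p) / s"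
        using \<open>s > 0\<close> by (simp add: scaleR_add_right[symmetric] del: scaleR_add_right)
      finally show ?thesis using \<open>s > 0\<close> unfolding s_def by (simp add: le_divide_eq)
    qed (simp add: s_def)
  qed
qed

lemma bounded_cone_section:
  fixes K P :: "'a::euclidean_space set"
  assumes "closed K" "cone K" "closed P" "cone P" "K \<inter> uminus ` P = {0}"
  shows "bounded (msum K (cball 0 R) \<inter> {w. a - w \<in> P})"
proof -
  obtain \<mu> where \<mu>: "\<mu> > 0" "\<And>k p. k \<in> K \<Longrightarrow> p \<in> P \<Longrightarrow> \<mu> * (norm k + norm p) \<le> norm (k + p)"
    using cone_sum_coercive[OF assms] by blast
  have bound: "norm w \<le> (norm a + R) / \<mu> + R"
    if w: "w \<in> msum K (cball 0 R)" "a - w \<in> P" for w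
  proof -
    obtain k where k: "k \<in> K" "norm (w - k) \<le> R" using w(1) unfolding msum_cball_iff by blast
    have "\<mu> * norm k \<le> \<mu> * (norm k + norm (a - w))" using \<mu>(1) by simp
    also have "\<dots> \<le> norm (k + (a - w))" using \<mu>(2)[OF k(1) w(2)] .
    also have "k + (a - w) = a - (w - k)" by (simp add: algebra_simps)
    also have "norm (a - (w - k)) \<le> norm a + R" using norm_triangle_ineq4[of a "w - k"] k(2) by linarith
    finally have "norm k \<le> (norm a + R) / \<mu>" using \<mu>(1) by (simp add: le_divide_eq mult.commute)
    then show ?thesis using k(2) norm_triangle_sub[of w k] by linarith
  qed
  show ?thesis
    unfolding bounded_iff
  proof (intro exI ballI)
    fix w assume "w \<in> msum K (cball 0 R) \<inter> {w. a - w \<in> P}"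
    then show "norm w \<le> (norm a + R) / \<mu> + R" using bound by blast
  qed
qed

lemma exists_eff_below:
  fixes K P :: "'a::euclidean_space set"
  assumes P: "closed_pointed_cone P"
    and K: "closed K" "cone K" "K \<inter> uminus ` P = {0}"
    and S: "closed S" "S \<subseteq> msum K (cball 0 R)" "a \<in> S"
  obtains e where "e \<in> eff S P" "a - e \<in> P"
proof -
  define C where "C = S \<inter> {w. a - w \<in> P}"
  have "closed P" "cone P" using P unfolding closed_pointed_cone_def by auto
  have "{w. a - w \<in> P} = (\<lambda>w. a - w) -` P" by auto
  then have "closed {w. a - w \<in> P}"
    using \<open>closed P\<close> by (simp add: closed_vimage continuous_intros)
  then have "closed C" unfolding C_def using S(1) by blast
  moreover have "C \<subseteq> msum K (cball 0 R) \<inter> {w. a - w \<in> P}" unfolding C_def using S(2) by blast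
  then have "bounded C"
    using bounded_subset[OF bounded_cone_section[OF K(1,2) \<open>closed P\<close> \<open>cone P\<close> K(3)]] by blast
  ultimately have "compact C" by (simp add: compact_eq_bounded_closed)
  moreover have "a \<in> C" unfolding C_def using S(3) closed_pointed_cone_zero[OF P] by simp
  ultimately obtain e where e: "e \<in> eff C P" using eff_exists[OF P] by blast
  then have "a - e \<in> P" unfolding eff_def C_def by blast
  moreover have "e \<in> eff S P" using eff_lower_section[OF P e[unfolded C_def]] .
  ultimately show thesis by (rule that[rotated])
qed

section \<open>The contingent cone\<close>

lemma contingentI_eventually:
  assumes "\<forall>k. h k > 0" "h \<longlonglongrightarrow> 0" "vs \<longlonglongrightarrow> v"
    and "eventually (\<lambda>k. z + h k *\<^sub>R vs k \<in> S) sequentially"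
  shows "v \<in> contingent S z"
proof -
  obtain N where N: "\<And>k. k \<ge> N \<Longrightarrow> z + h k *\<^sub>R vs k \<in> S"
    using assms(4) unfolding eventually_sequentially by blast
  show ?thesis
    unfolding contingent_def
    using assms(1) N LIMSEQ_ignore_initial_segment[OF assms(2), of N]
      LIMSEQ_ignore_initial_segment[OF assms(3), of N]
    by (intro CollectI exI[of _ "\<lambda>k. h (k + N)"] exI[of _ "\<lambda>k. vs (k + N)"]) auto
qed

lemma contingentI_approx:
  assumes "\<And>\<epsilon>. \<epsilon> > 0 \<Longrightarrow> \<exists>h u. 0 < h \<and> h < \<epsilon> \<and> dist u v < \<epsilon> \<and> z + h *\<^sub>R u \<in> S"
  shows "v \<in> contingent S z"
proof -
  have "\<forall>k. \<exists>h u. 0 < h \<and> h < inverse (real (Suc k)) \<and>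
      dist u v < inverse (real (Suc k)) \<and> z + h *\<^sub>R u \<in> S"
    using assms by simp
  then obtain h u where hu: "\<And>k. 0 < h k \<and> h k < inverse (real (Suc k)) \<and>
      dist (u k) v < inverse (real (Suc k)) \<and> z + h k *\<^sub>R u k \<in> S"
    by metis
  have "norm (h k) \<le> inverse (real (Suc k))" "norm (dist (u k) v) \<le> inverse (real (Suc k))" for k
    using hu[of k] by auto
  then have "h \<longlonglongrightarrow> 0" "u \<longlonglongrightarrow> v"
    unfolding tendsto_dist_iff[of u]
    by (auto intro: Lim_null_comparison[OF always_eventually LIMSEQ_inverse_real_of_nat])
  then show ?thesis
    using hu by (intro contingentI_eventually[of h]) auto
qed

lemma contingent_approxD:
  assumes "v \<in> contingent S z" "\<epsilon> > 0"
  shows "\<exists>h u. 0 < h \<and> h < \<epsilon> \<and> dist u v < \<epsilon> \<and> z + h *\<^sub>R u \<in> S"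
proof -
  obtain h vs where h: "\<forall>k. h k > 0" "h \<longlonglongrightarrow> 0" "vs \<longlonglongrightarrow> v" "\<forall>k. z + h k *\<^sub>R vs k \<in> S"
    using assms(1) unfolding contingent_def by blast
  have "eventually (\<lambda>k. dist (h k) 0 < \<epsilon> \<and> dist (vs k) v < \<epsilon>) sequentially"
    using tendstoD[OF h(2) assms(2)] tendstoD[OF h(3) assms(2)] by (rule eventually_conj)
  then obtain k where "dist (h k) 0 < \<epsilon>" "dist (vs k) v < \<epsilon>"
    unfolding eventually_sequentially by blast
  then show ?thesis using h(1,4) by (intro exI[of _ "h k"] exI[of _ "vs k"]) auto
qed

text \<open>The contingent cone is closed: approximations of nearby vectors are approximations of v.\<close>
lemma contingent_closed: "closed (contingent S (z::'a::real_normed_vector))"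
proof -
  have "v \<in> contingent S z" if v: "v \<in> closure (contingent S z)" for v
  proof (rule contingentI_approx)
    fix \<epsilon> :: real assume "\<epsilon> > 0"
    then obtain v' where v': "v' \<in> contingent S z" "dist v' v < \<epsilon> / 2"
      using v unfolding closure_approachable by (meson half_gt_zero)
    obtain h u where hu: "0 < h" "h < \<epsilon> / 2" "dist u v' < \<epsilon> / 2" "z + h *\<^sub>R u \<in> S"
      using contingent_approxD[OF v'(1)] \<open>\<epsilon> > 0\<close> by (meson half_gt_zero)
    have "dist u v < \<epsilon>" using dist_triangle[of u v v'] hu(3) v'(2) by linarith
    then show "\<exists>h u. 0 < h \<and> h < \<epsilon> \<and> dist u v < \<epsilon> \<and> z + h *\<^sub>R u \<in> S"
      using hu by (intro exI[of _ h] exI[of _ u]) auto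
  qed
  then show ?thesis using closure_subset_eq by blast
qed

lemma contingent_cone:
  assumes "z \<in> S"
  shows "cone (contingent S z)"
  unfolding cone_def
proof (intro ballI allI impI)
  fix v and c :: real assume "v \<in> contingent S z" "c \<ge> 0"
  then obtain h vs where h: "\<forall>k. h k > 0" "h \<longlonglongrightarrow> 0" "vs \<longlonglongrightarrow> v" "\<forall>k. z + h k *\<^sub>R vs k \<in> S"
    unfolding contingent_def by blast
  show "c *\<^sub>R v \<in> contingent S z"
  proof (cases "c = 0")
    case True
    have "(\<lambda>k. 0) \<longlonglongrightarrow> 0" by simp
    then show ?thesis
      using True assms h(1,2) by (intro contingentI_eventually[of h]) auto
  next
    case False
    then have "c > 0" using \<open>c \<ge> 0\<close> by simp
    have "(\<lambda>k. h k / c) \<longlonglongrightarrow> 0" using tendsto_divide_zero[OF h(2)] .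
    moreover have "(\<lambda>k. c *\<^sub>R vs k) \<longlonglongrightarrow> c *\<^sub>R v" by (intro tendsto_intros h(3))
    ultimately show ?thesis
      using h(1,4) \<open>c > 0\<close> by (intro contingentI_eventually[of "\<lambda>k. h k / c"]) auto
  qed
qed

text \<open>
  If z + h_k (c_k - d_k) lies in S with |d_k| \<le> b_k \<rightarrow> \<beta>, then the limit w of c_k is within
  distance \<beta> of the contingent cone: a cluster point d of (d_k) gives w - d in it.
\<close>
lemma contingent_perturbed:
  fixes z :: "'a::euclidean_space"
  assumes h: "\<forall>k. h k > 0" "h \<longlonglongrightarrow> 0"
    and c: "c \<longlonglongrightarrow> w" and b: "b \<longlonglongrightarrow> \<beta>" "\<And>k. norm (d k) \<le> b k"
    and mem: "eventually (\<lambda>k. z + h k *\<^sub>R (c k - d k) \<in> S) sequentially"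
  shows "\<exists>v\<in>contingent S z. norm (w - v) \<le> \<beta>"
proof -
  obtain B where B: "\<And>k. norm (b k) \<le> B"
    using convergent_imp_bounded[OF b(1)] unfolding bounded_iff by blast
  have "norm (d k) \<le> B" for k
    using b(2)[of k] B[of k] by simp
  then have "bounded (range d)" unfolding bounded_iff by blast
  then obtain d0 r where r: "strict_mono r" "(d \<circ> r) \<longlonglongrightarrow> d0"
    using bounded_imp_convergent_subsequence by blast
  have "norm d0 \<le> \<beta>"
  proof (rule tendsto_le[OF trivial_limit_sequentially])
    show "(b \<circ> r) \<longlonglongrightarrow> \<beta>" using LIMSEQ_subseq_LIMSEQ[OF b(1) r(1)] .
    show "(\<lambda>k. norm ((d \<circ> r) k)) \<longlonglongrightarrow> norm d0" using tendsto_norm[OF r(2)] .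
    show "\<forall>\<^sub>F k in sequentially. norm ((d \<circ> r) k) \<le> (b \<circ> r) k"
      using b(2) by (simp add: always_eventually)
  qed
  moreover have "w - d0 \<in> contingent S z"
  proof (rule contingentI_eventually[of "h \<circ> r"])
    show "\<forall>k. (h \<circ> r) k > 0" using h(1) by simp
    show "(h \<circ> r) \<longlonglongrightarrow> 0" using LIMSEQ_subseq_LIMSEQ[OF h(2) r(1)] .
    show "(\<lambda>k. (c \<circ> r) k - (d \<circ> r) k) \<longlonglongrightarrow> w - d0"
      using LIMSEQ_subseq_LIMSEQ[OF c r(1)] r(2) by (rule tendsto_diff)
    show "\<forall>\<^sub>F k in sequentially. z + (h \<circ> r) k *\<^sub>R ((c \<circ> r) k - (d \<circ> r) k) \<in> S"
      using eventually_subseq[OF r(1) mem] by (simp only: o_def)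
  qed
  ultimately show ?thesis by (intro bexI[of _ "w - d0"]) auto
qed

section \<open>Contingent derivatives of a Lipschitz map\<close>

lemma DWupE:
  assumes "w \<in> DWup T W P (t, x, y) (\<tau>, v)"
  obtains h g c where "\<forall>k. h k > 0" "h \<longlonglongrightarrow> 0" "g \<longlonglongrightarrow> (\<tau>, v)" "c \<longlonglongrightarrow> w"
    "\<And>k. (t, x) + h k *\<^sub>R g k \<in> {0..T} \<times> UNIV"
    "\<And>k. y + h k *\<^sub>R c k \<in>
       msum (W (fst ((t, x) + h k *\<^sub>R g k)) (snd ((t, x) + h k *\<^sub>R g k))) P"
proof -
  obtain h vs where h: "\<forall>k. h k > 0" "h \<longlonglongrightarrow> 0" "vs \<longlonglongrightarrow> (\<tau>, v, w)"
      "\<forall>k. (t, x, y) + h k *\<^sub>R vs k \<in> gph_up T W P"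
    using assms unfolding DWup_def contingent_def by auto
  define g where "g k = (fst (vs k), fst (snd (vs k)))" for k
  define c where "c k = snd (snd (vs k))" for k
  have g: "g \<longlonglongrightarrow> (\<tau>, v)"
    unfolding g_def using tendsto_fst[OF h(3)] tendsto_fst[OF tendsto_snd[OF h(3)]]
    by (auto intro!: tendsto_Pair)
  have c: "c \<longlonglongrightarrow> w" unfolding c_def using tendsto_snd[OF tendsto_snd[OF h(3)]] by simp
  have graph: "(t, x) + h k *\<^sub>R g k \<in> {0..T} \<times> UNIV"
    "y + h k *\<^sub>R c k \<in> msum (W (fst ((t, x) + h k *\<^sub>R g k)) (snd ((t, x) + h k *\<^sub>R g k))) P" for k
    using h(4)[rule_format, of k] unfolding gph_up_def g_def c_def by (cases "vs k"; auto)+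
  show thesis by (rule that[OF h(1,2) g c graph])
qed

lemma msum_scaled_shift:
  assumes "A \<subseteq> msum B (cball 0 (h * \<rho>))" "y + h *\<^sub>R c \<in> msum A P" "h > 0"
  obtains d where "norm d \<le> \<rho>" "y + h *\<^sub>R (c - d) \<in> msum B P"
proof -
  obtain a p where a: "a \<in> A" "p \<in> P" "y + h *\<^sub>R c = a + p"
    using assms(2) unfolding msum_def by blast
  then obtain b e where b: "b \<in> B" "norm e \<le> h * \<rho>" "a = b + e"
    using assms(1) unfolding msum_def by auto
  have "norm ((1 / h) *\<^sub>R e) \<le> \<rho>"
    using b(2) assms(3) by (simp add: divide_le_eq mult.commute)
  moreover have "y + h *\<^sub>R (c - (1 / h) *\<^sub>R e) = b + p"
    using a(3) b(3) assms(3) by (simp add: algebra_simps)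
  then have "y + h *\<^sub>R (c - (1 / h) *\<^sub>R e) \<in> msum B P"
    using b(1) a(2) unfolding msum_def by blast
  ultimately show thesis by (rule that)
qed

lemma DWup_near_contingent_local:
  fixes W :: "real \<Rightarrow> 'n::euclidean_space \<Rightarrow> 'p::euclidean_space set"
  assumes l: "l \<ge> 0" and N: "open N" "(t, x) \<in> N" and t: "t \<in> {0..T}"
    and lipN: "\<forall>z1\<in>N \<inter> ({0..T} \<times> UNIV). \<forall>z2\<in>N \<inter> ({0..T} \<times> UNIV).
           W (fst z1) (snd z1) \<subseteq> msum (W (fst z2) (snd z2)) (cball 0 (l * norm (z1 - z2)))"
    and w: "w \<in> DWup T W P (t, x, y) (\<tau>, v)"
  shows "\<exists>k\<in>contingent (msum (W t x) P) y. norm (w - k) \<le> l * norm (\<tau>, v)"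
proof -
  obtain h g c where h: "\<forall>k. h k > 0" "h \<longlonglongrightarrow> 0" and g: "g \<longlonglongrightarrow> (\<tau>, v)" and c: "c \<longlonglongrightarrow> w"
    and graph: "\<And>k. (t, x) + h k *\<^sub>R g k \<in> {0..T} \<times> UNIV"
      "\<And>k. y + h k *\<^sub>R c k \<in>
         msum (W (fst ((t, x) + h k *\<^sub>R g k)) (snd ((t, x) + h k *\<^sub>R g k))) P"
    by (rule DWupE[OF w]) blast
  have "(\<lambda>k. (t, x) + h k *\<^sub>R g k) \<longlonglongrightarrow> (t, x) + 0 *\<^sub>R (\<tau>, v)"
    by (intro tendsto_intros h(2) g)
  then have near: "eventually (\<lambda>k. (t, x) + h k *\<^sub>R g k \<in> N) sequentially"
    using N by (simp add: topological_tendstoD)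
  have "\<exists>d. norm d \<le> l * norm (g k) \<and>
      ((t, x) + h k *\<^sub>R g k \<in> N \<longrightarrow> y + h k *\<^sub>R (c k - d) \<in> msum (W t x) P)" for k
  proof (cases "(t, x) + h k *\<^sub>R g k \<in> N")
    case True
    have "norm ((t, x) + h k *\<^sub>R g k - (t, x)) = h k * norm (g k)"
      using h(1) by (simp add: abs_of_pos)
    then have "W (fst ((t, x) + h k *\<^sub>R g k)) (snd ((t, x) + h k *\<^sub>R g k))
        \<subseteq> msum (W t x) (cball 0 (h k * (l * norm (g k))))"
      using lipN True graph(1)[of k] N(2) t by (force simp: mult.left_commute)
    from msum_scaled_shift[OF this graph(2) h(1)[rule_format]] show ?thesis by blast
  next
    case False
    then show ?thesis using l by (intro exI[of _ 0]) simp
  qed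
  then obtain d where d: "\<And>k. norm (d k) \<le> l * norm (g k)"
    "\<And>k. (t, x) + h k *\<^sub>R g k \<in> N \<Longrightarrow> y + h k *\<^sub>R (c k - d k) \<in> msum (W t x) P"
    by metis
  show ?thesis
  proof (rule contingent_perturbed[OF h c _ d(1)])
    show "(\<lambda>k. l * norm (g k)) \<longlonglongrightarrow> l * norm (\<tau>, v)" by (intro tendsto_intros g)
    show "eventually (\<lambda>k. y + h k *\<^sub>R (c k - d k) \<in> msum (W t x) P) sequentially"
      using near d(2) by (rule eventually_mono)
  qed
qed

lemma DWup_near_contingent:
  fixes W :: "real \<Rightarrow> 'n::euclidean_space \<Rightarrow> 'p::euclidean_space set"
  assumes "lipschitz_around T W (t, x)" "t \<in> {0..T}"
  obtains l where "l > 0"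
    "\<And>\<tau> v w. w \<in> DWup T W P (t, x, y) (\<tau>, v) \<Longrightarrow>
       \<exists>k\<in>contingent (msum (W t x) P) y. norm (w - k) \<le> l * norm (\<tau>, v)"
proof -
  obtain l N where "l > 0" "open N" "(t, x) \<in> N"
    and "\<forall>z1\<in>N \<inter> ({0..T} \<times> UNIV). \<forall>z2\<in>N \<inter> ({0..T} \<times> UNIV).
           W (fst z1) (snd z1) \<subseteq> msum (W (fst z2) (snd z2)) (cball 0 (l * norm (z1 - z2)))"
    using assms(1) unfolding lipschitz_around_def by blast
  then show thesis
    using that DWup_near_contingent_local[OF less_imp_le[OF \<open>l > 0\<close>] _ _ assms(2)] by blast
qed

lemma FL_bounded:
  assumes "MOC_data T U f L"
  shows "bounded (FL U f L x)"
proof -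
  have "{(f x u, L x u) | u. u \<in> U} \<subseteq>
      ((\<lambda>(x, u). f x u) ` (UNIV \<times> U)) \<times> ((\<lambda>(x, u). L x u) ` (UNIV \<times> U))"
    by force
  moreover have "bounded (((\<lambda>(x, u). f x u) ` (UNIV \<times> U)) \<times> ((\<lambda>(x, u). L x u) ` (UNIV \<times> U)))"
    using assms unfolding MOC_data_def by (intro bounded_Times) auto
  ultimately show ?thesis
    unfolding FL_def by (meson bounded_subset bounded_closure bounded_convex_hull)
qed

text \<open>Each value of the contingent derivative is closed, being a slice of a contingent cone.\<close>
lemma DWup_closed: "closed (DWup T W P z (\<tau>, v))"
proof -
  have "DWup T W P z (\<tau>, v) = (\<lambda>w. (\<tau>, v, w)) -` contingent (gph_up T W P) z"
    unfolding DWup_def by auto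
  then show ?thesis by (simp add: closed_vimage contingent_closed continuous_intros)
qed

lemma shifted_derivatives_near_contingent:
  fixes W :: "real \<Rightarrow> 'n::euclidean_space \<Rightarrow> 'p::euclidean_space set"
  assumes "MOC_data T U f L" "lipschitz_around T W (t, x)" "t \<in> {0..T}"
  obtains R where
    "\<And>fv Lv d. (fv, Lv) \<in> FL U f L x \<Longrightarrow> d \<in> DWup T W P (t, x, y) (1, fv) \<Longrightarrow>
       d \<in> msum (contingent (msum (W t x) P) y) (cball 0 R) \<and>
       Lv + d \<in> msum (contingent (msum (W t x) P) y) (cball 0 R)"
proof -
  obtain B where B: "B > 0" "\<And>z. z \<in> FL U f L x \<Longrightarrow> norm z \<le> B"
    using FL_bounded[OF assms(1)] unfolding bounded_pos by blast
  obtain l where l: "l > 0"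
    "\<And>\<tau> v w. w \<in> DWup T W P (t, x, y) (\<tau>, v) \<Longrightarrow>
       \<exists>k\<in>contingent (msum (W t x) P) y. norm (w - k) \<le> l * norm (\<tau>, v)"
    using DWup_near_contingent[OF assms(2,3)] by blast
  define R where "R = B + l * (1 + B)"
  show thesis
  proof (rule that)
    fix fv Lv d assume FL: "(fv, Lv) \<in> FL U f L x" and d: "d \<in> DWup T W P (t, x, y) (1, fv)"
    have "norm fv \<le> B" "norm Lv \<le> B"
      using B(2)[OF FL] norm_fst_le[of fv Lv] norm_snd_le[of Lv fv] by linarith+
    obtain k where k: "k \<in> contingent (msum (W t x) P) y" "norm (d - k) \<le> l * norm (1::real, fv)"
      using l(2)[OF d] by blast
    have "norm (1::real, fv) \<le> 1 + B"
      using norm_Pair_le[of "1::real" fv] \<open>norm fv \<le> B\<close> by simp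
    then have "norm (d - k) \<le> l * (1 + B)"
      using k(2) l(1) by (meson mult_left_mono less_imp_le order_trans)
    moreover have "norm (Lv + d - k) \<le> norm Lv + norm (d - k)"
      using norm_triangle_ineq[of Lv "d - k"] by (simp add: algebra_simps)
    ultimately have "norm (d - k) \<le> R" "norm (Lv + d - k) \<le> R"
      using \<open>norm Lv \<le> B\<close> B(1) unfolding R_def by linarith+
    then show "d \<in> msum (contingent (msum (W t x) P) y) (cball 0 R) \<and>
        Lv + d \<in> msum (contingent (msum (W t x) P) y) (cball 0 R)"
      using k(1) unfolding msum_cball_iff by blast
  qed
qed

lemma closure_translates_near_contingent:
  fixes K :: "'p::euclidean_space set"
  assumes "closed K"
    and R: "\<And>fv Lv d. (fv, Lv) \<in> FL U f L x \<Longrightarrow> d \<in> DWup T W P z (1, fv) \<Longrightarrow>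
       Lv + d \<in> msum K (cball 0 R)"
  shows "closure (\<Union>(fv, Lv)\<in>FL U f L x. (\<lambda>d. Lv + d) ` Dup T W P z (1, fv))
           \<subseteq> msum K (cball 0 R)"
proof (rule closure_minimal)
  show "(\<Union>(fv, Lv)\<in>FL U f L x. (\<lambda>d. Lv + d) ` Dup T W P z (1, fv)) \<subseteq> msum K (cball 0 R)"
  proof
    fix s assume "s \<in> (\<Union>(fv, Lv)\<in>FL U f L x. (\<lambda>d. Lv + d) ` Dup T W P z (1, fv))"
    then obtain fv Lv d where "(fv, Lv) \<in> FL U f L x" "d \<in> Dup T W P z (1, fv)" "s = Lv + d"
      by auto
    then show "s \<in> msum K (cball 0 R)" using R unfolding Dup_def eff_def by blast
  qed
qed (rule closed_msum_cball[OF assms(1)])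

lemma prop_eff_contingent_cone:
  assumes "closed_pointed_cone P" "y \<in> prop_eff A P"
  shows "closed (contingent (msum A P) y)" "cone (contingent (msum A P) y)"
    "contingent (msum A P) y \<inter> uminus ` P = {0}"
proof -
  have "y = y + 0" by simp
  then have "y \<in> msum A P"
    using assms closed_pointed_cone_zero[OF assms(1)] unfolding prop_eff_def eff_def msum_def by blast
  then show "closed (contingent (msum A P) y)" "cone (contingent (msum A P) y)"
    by (simp_all add: contingent_closed contingent_cone)
  show "contingent (msum A P) y \<inter> uminus ` P = {0}"
    using assms(2) unfolding prop_eff_def by blast
qed

theorem proposition6p3:
  fixes T :: real and U :: "'m::euclidean_space set"
    and f :: "'n::euclidean_space \<Rightarrow> 'm \<Rightarrow> 'n" and L :: "'n \<Rightarrow> 'm \<Rightarrow> 'p::euclidean_space"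
    and P :: "'p set" and W :: "real \<Rightarrow> 'n \<Rightarrow> 'p set"
    and t :: real and x :: 'n and y :: 'p
  assumes "MOC_data T U f L"
    and "ordering_cone P"
    and "gen_contingent_solution T U f L P W"
    and "t \<in> {0..<T}"
    and "y \<in> W t x"
    and "lipschitz_around T W (t, x)"
    and "y \<in> prop_eff (W t x) P"
  shows "0 \<in> msum (eff (closure (\<Union>(fv, Lv)\<in>FL U f L x.
                         (\<lambda>d. Lv + d) ` Dup T W P (t, x, y) (1, fv))) P) P"
proof -
  define S where "S = (\<Union>(fv, Lv)\<in>FL U f L x. (\<lambda>d. Lv + d) ` Dup T W P (t, x, y) (1, fv))"
  define K where "K = contingent (msum (W t x) P) y"
  have P: "closed_pointed_cone P" using assms(2) by (rule ordering_cone_imp_closed_pointed_cone)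
  have K: "closed K" "cone K" "K \<inter> uminus ` P = {0}"
    unfolding K_def using prop_eff_contingent_cone[OF P assms(7)] by blast+
  have "t \<in> {0..T}" using assms(4) by simp
  then obtain R where R: "\<And>fv Lv d. (fv, Lv) \<in> FL U f L x \<Longrightarrow> d \<in> DWup T W P (t, x, y) (1, fv) \<Longrightarrow>
       d \<in> msum K (cball 0 R) \<and> Lv + d \<in> msum K (cball 0 R)"
    using shifted_derivatives_near_contingent[OF assms(1,6)] unfolding K_def by blast
  have S_near: "closure S \<subseteq> msum K (cball 0 R)"
    unfolding S_def by (rule closure_translates_near_contingent[OF K(1)]) (use R in blast)
  obtain fb Lb where fb: "(fb, Lb) \<in> FL U f L x" "- Lb \<in> DWup T W P (t, x, y) (1, fb)"
    using assms(3,4,5) unfolding gen_contingent_solution_def by blast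
  have "DWup T W P (t, x, y) (1, fb) \<subseteq> msum K (cball 0 R)" using R[OF fb(1)] by blast
  then obtain e where e: "e \<in> Dup T W P (t, x, y) (1, fb)" "- Lb - e \<in> P"
    using exists_eff_below[OF P K DWup_closed _ fb(2)] unfolding Dup_def by blast
  have "Lb + e \<in> S" unfolding S_def by (rule UN_I[OF fb(1)]) (use e(1) in simp)
  then have "Lb + e \<in> closure S" using closure_subset by blast
  then obtain m where m: "m \<in> eff (closure S) P" "Lb + e - m \<in> P"
    by (rule exists_eff_below[OF P K closed_closure S_near])
  have "- m \<in> P" using closed_pointed_cone_add[OF P e(2) m(2)] by simp
  then have "m + - m \<in> msum (eff (closure S) P) P" using m(1) unfolding msum_def by blast
  then show ?thesis unfolding S_def by simp
qed

end
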